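(* Every $3\times3\times3$ quaternion tensor $T$ satisfies $\mathrm{rank}(T)\le6$.
   Context: $\mathbb{H}$ denotes the real quaternions. An $n_1\times n_2\times n_3$ quaternion tensor is an array $T=(T_{ijk})$ with entries in $\mathbb{H}$, $1\le i\le n_1$, $1\le j\le n_2$, $1\le k\le n_3$; it is written $T=(A_1;\dots;A_{n_2})$ where the frontal slice $A_j$ is the $n_1\times n_3$ matrix $(T_{ijk})_{i,k}$. A nonzero tensor is simple if $T_{ijk}=a_ib_jc_k$ (quaternion product in this order) for some $\vec a\in\mathbb{H}^{n_1},\vec b\in\mathbb{H}^{n_2},\vec c\in\mathbb{H}^{n_3}$. The rank of $T$ is the least number of simple tensors summing to $T$ (the zero tensor has rank $0$). *)

theory Defs
  imports Main "HOL.Real"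
begin

datatype quat = Quat (Re: real) (Im1: real) (Im2: real) (Im3: real)

instantiation quat :: comm_monoid_add
begin
definition zero_quat :: quat where "zero_quat = Quat 0 0 0 0"
definition plus_quat :: "quat \<Rightarrow> quat \<Rightarrow> quat" where
  "plus_quat p q = Quat (Re p + Re q) (Im1 p + Im1 q) (Im2 p + Im2 q) (Im3 p + Im3 q)"
instance
  by standard (auto simp: zero_quat_def plus_quat_def algebra_simps)
end

instantiation quat :: times
begin
definition times_quat :: "quat \<Rightarrow> quat \<Rightarrow> quat" where
  "times_quat p q = Quat
     (Re p * Re q - Im1 p * Im1 q - Im2 p * Im2 q - Im3 p * Im3 q)
     (Re p * Im1 q + Im1 p * Re q + Im2 p * Im3 q - Im3 p * Im2 q)
     (Re p * Im2 q - Im1 p * Im3 q + Im2 p * Re q + Im3 p * Im1 q)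
     (Re p * Im3 q + Im1 p * Im2 q - Im2 p * Im1 q + Im3 p * Re q)"
instance ..
end

text \<open>An n1 x n2 x n3 quaternion tensor: entries T i j k for i < n1, j < n2, k < n3
  (0-based indices; values outside this range are irrelevant).\<close>

type_synonym qtensor = "nat \<Rightarrow> nat \<Rightarrow> nat \<Rightarrow> quat"

definition simple_qtensor :: "nat \<Rightarrow> nat \<Rightarrow> nat \<Rightarrow> qtensor \<Rightarrow> bool" where
  "simple_qtensor n1 n2 n3 T \<longleftrightarrow>
     (\<exists>i<n1. \<exists>j<n2. \<exists>k<n3. T i j k \<noteq> 0) \<and>
     (\<exists>a b c :: nat \<Rightarrow> quat. \<forall>i<n1. \<forall>j<n2. \<forall>k<n3. T i j k = a i * b j * c k)"

definition qtensor_rank :: "nat \<Rightarrow> nat \<Rightarrow> nat \<Rightarrow> qtensor \<Rightarrow> nat" where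
  "qtensor_rank n1 n2 n3 T = (LEAST r. \<exists>S :: nat \<Rightarrow> qtensor.
     (\<forall>l<r. simple_qtensor n1 n2 n3 (S l)) \<and>
     (\<forall>i<n1. \<forall>j<n2. \<forall>k<n3. T i j k = (\<Sum>l<r. S l i j k)))"

end

theory Submission
  imports Defs "HOL-Library.Function_Algebras"
begin

text \<open>
  Let \<open>S\<^sub>0, S\<^sub>1, S\<^sub>2\<close> be the slices \<open>S\<^sub>j = (T i j k)\<^sub>i\<^sub>k\<close>. If no slice is invertible,
  Gaussian elimination shows that each has rank at most 2, which gives \<open>3 \<cdot> 2\<close> simple terms.
  Otherwise, after a cyclic shift of \<open>j\<close>, \<open>B S\<^sub>0 = I\<close>. Every \<open>3 \<times> 3\<close> quaternion matrix becomes
  diagonalizable after subtracting a rank-one matrix: subtracting \<open>x y\<close> makes it upper triangular with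
  pairwise distinct diagonal entries, the first and last of them real. So \<open>S\<^sub>1 B = U D V + x y\<close>
  with \<open>U V = I\<close> and \<open>D\<close> diagonal. Moreover every \<open>3 \<times> 3\<close> matrix is diagonal plus rank two, so
  \<open>V S\<^sub>2 B U = G + L R\<close>. With \<open>W = V S\<^sub>0\<close> this gives
  \<open>S\<^sub>0 = U W\<close>, \<open>S\<^sub>1 = U D W + x (y S\<^sub>0)\<close> and \<open>S\<^sub>2 = U G W + (U L) (R W)\<close>:
  three simple terms \<open>U\<^sub>i\<^sub>l \<cdot> (1, D\<^sub>l, G\<^sub>l)\<^sub>j \<cdot> W\<^sub>l\<^sub>k\<close> shared by all slices, plus one and two more.
\<close>

section \<open>Quaternions form a division ring\<close>

lemma quat_eq_iff: "p = q \<longleftrightarrow> Re p = Re q \<and> Im1 p = Im1 q \<and> Im2 p = Im2 q \<and> Im3 p = Im3 q"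
  by (cases p; cases q) auto

lemma quat_zero_sel [simp]: "Re 0 = 0" "Im1 0 = 0" "Im2 0 = 0" "Im3 0 = 0"
  by (simp_all add: zero_quat_def)

lemma quat_plus_sel [simp]:
  "Re (p + q) = Re p + Re q" "Im1 (p + q) = Im1 p + Im1 q"
  "Im2 (p + q) = Im2 p + Im2 q" "Im3 (p + q) = Im3 p + Im3 q"
  by (simp_all add: plus_quat_def)

lemma quat_times_sel [simp]:
  "Re (p * q) = Re p * Re q - Im1 p * Im1 q - Im2 p * Im2 q - Im3 p * Im3 q"
  "Im1 (p * q) = Re p * Im1 q + Im1 p * Re q + Im2 p * Im3 q - Im3 p * Im2 q"
  "Im2 (p * q) = Re p * Im2 q - Im1 p * Im3 q + Im2 p * Re q + Im3 p * Im1 q"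
  "Im3 (p * q) = Re p * Im3 q + Im1 p * Im2 q - Im2 p * Im1 q + Im3 p * Re q"
  by (simp_all add: times_quat_def)

definition quat_norm2 :: "quat \<Rightarrow> real" where
  "quat_norm2 q = (Re q)\<^sup>2 + (Im1 q)\<^sup>2 + (Im2 q)\<^sup>2 + (Im3 q)\<^sup>2"

lemma quat_norm2_eq_0_iff: "quat_norm2 q = 0 \<longleftrightarrow> q = 0"
  by (simp add: quat_norm2_def quat_eq_iff add_nonneg_eq_0_iff)

instantiation quat :: "{one, uminus, minus, inverse}"
begin
definition "one_quat = Quat 1 0 0 0"
definition "uminus_quat q = Quat (- Re q) (- Im1 q) (- Im2 q) (- Im3 q)"
definition "minus_quat p q = Quat (Re p - Re q) (Im1 p - Im1 q) (Im2 p - Im2 q) (Im3 p - Im3 q)"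
definition "inverse_quat q =
  Quat (Re q / quat_norm2 q) (- Im1 q / quat_norm2 q) (- Im2 q / quat_norm2 q) (- Im3 q / quat_norm2 q)"
definition "divide_quat p q = p * inverse (q::quat)"
instance ..
end

lemma quat_one_sel [simp]: "Re 1 = 1" "Im1 1 = 0" "Im2 1 = 0" "Im3 1 = 0"
  by (simp_all add: one_quat_def)

lemma quat_uminus_sel [simp]: "Re (- q) = - Re q" "Im1 (- q) = - Im1 q" "Im2 (- q) = - Im2 q" "Im3 (- q) = - Im3 q"
  by (simp_all add: uminus_quat_def)

lemma quat_minus_sel [simp]:
  "Re (p - q) = Re p - Re q" "Im1 (p - q) = Im1 p - Im1 q"
  "Im2 (p - q) = Im2 p - Im2 q" "Im3 (p - q) = Im3 p - Im3 q"
  by (simp_all add: minus_quat_def)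

lemma quat_inverse_sel [simp]:
  "Re (inverse q) = Re q / quat_norm2 q" "Im1 (inverse q) = - Im1 q / quat_norm2 q"
  "Im2 (inverse q) = - Im2 q / quat_norm2 q" "Im3 (inverse q) = - Im3 q / quat_norm2 q"
  by (simp_all add: inverse_quat_def)

instance quat :: division_ring
proof
  fix p q r :: quat
  show "p * q * r = p * (q * r)" "(p + q) * r = p * r + q * r" "p * (q + r) = p * q + p * r"
    by (simp_all add: quat_eq_iff algebra_simps)
  show "1 * p = p" "p * 1 = p" "- p + p = 0" "p - q = p + - q" "(0::quat) \<noteq> 1"
    by (simp_all add: quat_eq_iff)
  show "inverse (0::quat) = 0" "p / q = p * inverse q"
    by (simp_all add: quat_eq_iff divide_quat_def)
  assume "p \<noteq> 0"
  then have "quat_norm2 p \<noteq> 0" by (simp add: quat_norm2_eq_0_iff)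
  then have "(Re p * Re p + Im1 p * Im1 p + Im2 p * Im2 p + Im3 p * Im3 p) / quat_norm2 p = 1"
    by (simp add: quat_norm2_def power2_eq_square)
  then show "inverse p * p = 1" "p * inverse p = 1"
    by (simp_all add: quat_eq_iff add_divide_distrib diff_divide_distrib algebra_simps)
qed

section \<open>Matrices\<close>

text \<open>Matrices are functions on index pairs. \<open>mat_eq n\<close> compares only the leading \<open>n \<times> n\<close> blocks,
  and the first argument of \<open>mat_mult\<close> is the inner dimension, so a product of a \<open>3 \<times> 2\<close> and a
  \<open>2 \<times> 3\<close> matrix is \<open>mat_mult 2 L R\<close>.\<close>

type_synonym 'a mat = "nat \<Rightarrow> nat \<Rightarrow> 'a"

definition mat_mult :: "nat \<Rightarrow> 'a::semiring_0 mat \<Rightarrow> 'a mat \<Rightarrow> 'a mat" where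
  "mat_mult m X Y = (\<lambda>i k. \<Sum>l<m. X i l * Y l k)"

definition mat_one :: "'a::{zero, one} mat" where
  "mat_one i k = (if i = k then 1 else 0)"

definition mat_diag :: "(nat \<Rightarrow> 'a::zero) \<Rightarrow> 'a mat" where
  "mat_diag d i k = (if i = k then d i else 0)"

definition mat_eq :: "nat \<Rightarrow> 'a mat \<Rightarrow> 'a mat \<Rightarrow> bool" where
  "mat_eq n X Y \<longleftrightarrow> (\<forall>i<n. \<forall>k<n. X i k = Y i k)"

lemma all_less_3: "(\<forall>i<3. Q i) \<longleftrightarrow> Q 0 \<and> Q 1 \<and> Q (2::nat)"
  by (auto simp: less_Suc_eq eval_nat_numeral)

lemma sum_lessThan_3: "(\<Sum>l<3. f l) = f 0 + f 1 + f (2::nat)"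
  by (simp add: eval_nat_numeral)

lemma sum_lessThan_2: "(\<Sum>l<2. f l) = f 0 + f (1::nat)"
  by (simp add: eval_nat_numeral)

lemma mat_mult_assoc: "mat_mult n (mat_mult m X Y) Z = mat_mult m X (mat_mult n Y Z)"
proof (intro ext)
  fix i k
  have "mat_mult n (mat_mult m X Y) Z i k = (\<Sum>l<n. \<Sum>j<m. X i j * (Y j l * Z l k))"
    by (simp add: mat_mult_def sum_distrib_right mult.assoc)
  also have "\<dots> = (\<Sum>j<m. \<Sum>l<n. X i j * (Y j l * Z l k))"
    by (rule sum.swap)
  also have "\<dots> = mat_mult m X (mat_mult n Y Z) i k"
    by (simp add: mat_mult_def sum_distrib_left)
  finally show "mat_mult n (mat_mult m X Y) Z i k = mat_mult m X (mat_mult n Y Z) i k" .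
qed

lemma mat_mult_add_left: "mat_mult m (X + Y) Z = mat_mult m X Z + mat_mult m Y Z"
  by (simp add: mat_mult_def plus_fun_def distrib_right sum.distrib)

lemma mat_mult_add_right: "mat_mult m X (Y + Z) = mat_mult m X Y + mat_mult m X Z"
  by (simp add: mat_mult_def plus_fun_def distrib_left sum.distrib)

lemma mat_mult_diag: "mat_mult n (mat_mult n U (mat_diag d)) W = (\<lambda>i k. \<Sum>l<n. U i l * d l * W l k)"
  by (simp add: mat_mult_def mat_diag_def if_distrib[where f = "\<lambda>x. _ * x"] cong: if_cong)

lemma mat_eq_refl: "mat_eq n X X"
  by (simp add: mat_eq_def)

lemma mat_eq_sym: "mat_eq n X Y \<Longrightarrow> mat_eq n Y X"
  by (simp add: mat_eq_def)

lemma mat_eq_trans [trans]: "mat_eq n X Y \<Longrightarrow> mat_eq n Y Z \<Longrightarrow> mat_eq n X Z"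
  by (simp add: mat_eq_def)

lemma mat_mult_cong:
  "m \<le> n \<Longrightarrow> mat_eq n X X' \<Longrightarrow> mat_eq n Y Y' \<Longrightarrow> mat_eq n (mat_mult m X Y) (mat_mult m X' Y')"
  unfolding mat_eq_def mat_mult_def by (auto intro!: sum.cong)

lemma mat_add_cong: "mat_eq n X X' \<Longrightarrow> mat_eq n Y Y' \<Longrightarrow> mat_eq n (X + Y) (X' + Y')"
  by (simp add: mat_eq_def)

lemma mat_mult_one_left: "mat_eq n (mat_mult n mat_one X) (X :: 'a::semiring_1 mat)"
  by (simp add: mat_eq_def mat_mult_def mat_one_def if_distrib[where f = "\<lambda>x. x * _"] cong: if_cong)

lemma mat_mult_one_right: "mat_eq n (mat_mult n X mat_one) (X :: 'a::semiring_1 mat)"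
  by (simp add: mat_eq_def mat_mult_def mat_one_def if_distrib[where f = "\<lambda>x. _ * x"] cong: if_cong)

lemma mat_mult_cancel_right:
  fixes X :: "'a::semiring_1 mat"
  assumes "mat_eq n (mat_mult n B A) mat_one"
  shows "mat_eq n (mat_mult n (mat_mult n X B) A) X"
proof -
  have "mat_eq n (mat_mult n X (mat_mult n B A)) (mat_mult n X mat_one)"
    by (rule mat_mult_cong[OF order_refl mat_eq_refl assms])
  also have "mat_eq n \<dots> X"
    by (rule mat_mult_one_right)
  finally show ?thesis by (simp only: mat_mult_assoc)
qed

lemma mat_mult_cancel_left:
  fixes X :: "'a::semiring_1 mat"
  assumes "mat_eq n (mat_mult n U V) mat_one"
  shows "mat_eq n (mat_mult n U (mat_mult n V X)) X"
proof -
  have "mat_eq n (mat_mult n (mat_mult n U V) X) (mat_mult n mat_one X)"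
    by (rule mat_mult_cong[OF order_refl assms mat_eq_refl])
  also have "mat_eq n \<dots> X"
    by (rule mat_mult_one_left)
  finally show ?thesis by (simp only: mat_mult_assoc)
qed

section \<open>Sums of rank-one tensors\<close>

definition rank1_sum :: "nat \<Rightarrow> nat \<Rightarrow> nat \<Rightarrow> nat \<Rightarrow> qtensor \<Rightarrow> bool" where
  "rank1_sum n1 n2 n3 r T \<longleftrightarrow> (\<exists>a b c :: nat \<Rightarrow> nat \<Rightarrow> quat.
     \<forall>i<n1. \<forall>j<n2. \<forall>k<n3. T i j k = (\<Sum>l<r. a l i * b l j * c l k))"

lemma rank1_sumI: "rank1_sum n1 n2 n3 r (\<lambda>i j k. \<Sum>l<r. a l i * b l j * c l k)"
  unfolding rank1_sum_def by blast

lemma simple_decomposition_of_rank1_sum: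
  assumes "rank1_sum n1 n2 n3 r T"
  shows "\<exists>r'\<le>r. \<exists>S. (\<forall>l<r'. simple_qtensor n1 n2 n3 (S l)) \<and>
           (\<forall>i<n1. \<forall>j<n2. \<forall>k<n3. T i j k = (\<Sum>l<r'. S l i j k))"
  using assms
proof (induction r arbitrary: T)
  case 0
  then show ?case by (auto simp: rank1_sum_def)
next
  case (Suc r)
  then obtain a b c where T: "\<forall>i<n1. \<forall>j<n2. \<forall>k<n3. T i j k = (\<Sum>l<Suc r. a l i * b l j * c l k)"
    by (auto simp: rank1_sum_def)
  define X where "X = (\<lambda>i j k. a r i * b r j * c r k)"
  have "rank1_sum n1 n2 n3 r (\<lambda>i j k. T i j k - X i j k)"
    unfolding rank1_sum_def using T by (auto simp: X_def)
  then obtain r' S where r': "r' \<le> r" and S: "\<forall>l<r'. simple_qtensor n1 n2 n3 (S l)"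
    and TX: "\<forall>i<n1. \<forall>j<n2. \<forall>k<n3. T i j k - X i j k = (\<Sum>l<r'. S l i j k)"
    using Suc.IH by blast
  show ?case
  proof (cases "\<exists>i<n1. \<exists>j<n2. \<exists>k<n3. X i j k \<noteq> 0")
    case True
    then have "simple_qtensor n1 n2 n3 X"
      unfolding simple_qtensor_def X_def by blast
    with S have "\<forall>l<Suc r'. simple_qtensor n1 n2 n3 ((S(r' := X)) l)"
      by (auto simp: less_Suc_eq)
    moreover have "\<forall>i<n1. \<forall>j<n2. \<forall>k<n3. T i j k = (\<Sum>l<Suc r'. (S(r' := X)) l i j k)"
      using TX by (simp add: diff_eq_eq)
    ultimately show ?thesis using r' by (intro exI[of _ "Suc r'"]) auto
  next
    case False
    with r' S TX show ?thesis by (intro exI[of _ r']) auto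
  qed
qed

lemma qtensor_rank_le_of_rank1_sum:
  assumes "rank1_sum n1 n2 n3 r T"
  shows "qtensor_rank n1 n2 n3 T \<le> r"
proof -
  obtain r' S where "r' \<le> r" and S: "(\<forall>l<r'. simple_qtensor n1 n2 n3 (S l)) \<and>
      (\<forall>i<n1. \<forall>j<n2. \<forall>k<n3. T i j k = (\<Sum>l<r'. S l i j k))"
    using simple_decomposition_of_rank1_sum[OF assms] by blast
  have "qtensor_rank n1 n2 n3 T \<le> r'"
    unfolding qtensor_rank_def by (rule Least_le) (use S in blast)
  with \<open>r' \<le> r\<close> show ?thesis by simp
qed

lemma sum_lessThan_add_split:
  fixes r s :: nat
  shows "(\<Sum>l<r + s. f l) = (\<Sum>l<r. f l) + (\<Sum>l<s. f (r + l))"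
  by (induction s) (simp_all add: add.assoc)

lemma rank1_sum_add:
  assumes "rank1_sum n1 n2 n3 r T" and "rank1_sum n1 n2 n3 s T'"
  shows "rank1_sum n1 n2 n3 (r + s) (\<lambda>i j k. T i j k + T' i j k)"
proof -
  obtain a b c where T: "\<forall>i<n1. \<forall>j<n2. \<forall>k<n3. T i j k = (\<Sum>l<r. a l i * b l j * c l k)"
    using assms(1) by (auto simp: rank1_sum_def)
  obtain a' b' c' where T': "\<forall>i<n1. \<forall>j<n2. \<forall>k<n3. T' i j k = (\<Sum>l<s. a' l i * b' l j * c' l k)"
    using assms(2) by (auto simp: rank1_sum_def)
  let ?join = "\<lambda>f g l. if l < r then f l else g (l - r)"
  show ?thesis
    unfolding rank1_sum_def
    by (rule exI[of _ "?join a a'"], rule exI[of _ "?join b b'"], rule exI[of _ "?join c c'"])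
      (simp add: T T' sum_lessThan_add_split)
qed

lemma rank1_sum_cong:
  assumes "rank1_sum n1 n2 n3 r T"
    and "\<And>i j k. i < n1 \<Longrightarrow> j < n2 \<Longrightarrow> k < n3 \<Longrightarrow> T' i j k = T i j k"
  shows "rank1_sum n1 n2 n3 r T'"
  using assms by (simp add: rank1_sum_def)

lemma rank1_sum_reindex_slices:
  assumes "rank1_sum n1 n2 n3 r (\<lambda>i j k. T i (\<pi> j) k)"
    and "\<And>j. j < n2 \<Longrightarrow> \<sigma> j < n2 \<and> \<pi> (\<sigma> j) = j"
  shows "rank1_sum n1 n2 n3 r T"
proof -
  obtain a b c where "\<forall>i<n1. \<forall>j<n2. \<forall>k<n3. T i (\<pi> j) k = (\<Sum>l<r. a l i * b l j * c l k)"
    using assms(1) by (auto simp: rank1_sum_def)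
  with assms(2) have "\<forall>i<n1. \<forall>j<n2. \<forall>k<n3. T i j k = (\<Sum>l<r. a l i * b l (\<sigma> j) * c l k)"
    by metis
  then show ?thesis unfolding rank1_sum_def by (intro exI[of _ a] exI[of _ "\<lambda>l j. b l (\<sigma> j)"] exI[of _ c])
qed

lemma rank1_sum_of_slice_factorizations:
  assumes "\<forall>j<n2. \<exists>L R. \<forall>i<n1. \<forall>k<n3. T i j k = mat_mult m L R i k"
  shows "rank1_sum n1 n2 n3 (n2 * m) T"
proof -
  from assms have "\<forall>j. \<exists>L. \<exists>R. j < n2 \<longrightarrow> (\<forall>i<n1. \<forall>k<n3. T i j k = mat_mult m L R i k)"
    by blast
  from choice[OF this] obtain L
    where "\<forall>j. \<exists>R. j < n2 \<longrightarrow> (\<forall>i<n1. \<forall>k<n3. T i j k = mat_mult m (L j) R i k)" ..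
  from choice[OF this] obtain R
    where LR: "\<forall>j<n2. \<forall>i<n1. \<forall>k<n3. T i j k = mat_mult m (L j) (R j) i k" by blast
  have "rank1_sum n1 n2 n3 (N * m) (\<lambda>i j k. if j < N then T i j k else 0)" if "N \<le> n2" for N
    using that
  proof (induction N)
    case 0
    show ?case
      using rank1_sumI[of n1 n2 n3 0] by simp
  next
    case (Suc N)
    have "rank1_sum n1 n2 n3 (N * m + m) (\<lambda>i j k. (if j < N then T i j k else 0) +
        (\<Sum>l<m. L N i l * mat_one N j * R N l k))"
      using Suc by (intro rank1_sum_add rank1_sumI) simp
    then have "rank1_sum n1 n2 n3 (N * m + m) (\<lambda>i j k. if j < Suc N then T i j k else 0)"
    proof (rule rank1_sum_cong)
      fix i j k assume "i < n1" "j < n2" "k < n3"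
      show "(if j < Suc N then T i j k else 0) =
          (if j < N then T i j k else 0) + (\<Sum>l<m. L N i l * mat_one N j * R N l k)"
      proof (cases "j = N")
        case True
        then show ?thesis using LR Suc.prems \<open>i < n1\<close> \<open>k < n3\<close> by (simp add: mat_one_def mat_mult_def)
      qed (simp add: mat_one_def)
    qed
    moreover have "Suc N * m = N * m + m" by simp
    ultimately show ?case by (simp only:)
  qed
  from this[OF order_refl] show ?thesis
    by (rule rank1_sum_cong) simp
qed

section \<open>Row spans and the rank dichotomy\<close>

definition in_span :: "nat \<Rightarrow> 'a::semiring_0 mat \<Rightarrow> nat \<Rightarrow> (nat \<Rightarrow> 'a) \<Rightarrow> bool" where
  "in_span n R m v \<longleftrightarrow> (\<exists>c. \<forall>k<n. v k = (\<Sum>l<m. c l * R l k))"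

lemma in_span_row:
  fixes R :: "'a::semiring_1 mat"
  shows "l < m \<Longrightarrow> in_span n R m (R l)"
  unfolding in_span_def
  by (rule exI[of _ "\<lambda>i. if i = l then 1 else 0"])
    (simp add: if_distrib[where f = "\<lambda>x. x * _"] cong: if_cong)

lemma in_span_zero: "in_span n R m (\<lambda>_. 0)"
  unfolding in_span_def by (rule exI[of _ "\<lambda>_. 0"]) simp

lemma in_span_cong: "in_span n R m w \<Longrightarrow> (\<And>k. k < n \<Longrightarrow> v k = w k) \<Longrightarrow> in_span n R m v"
  unfolding in_span_def by auto

lemma in_span_add: "in_span n R m v \<Longrightarrow> in_span n R m w \<Longrightarrow> in_span n R m (\<lambda>k. v k + w k)"
  unfolding in_span_def
  by (elim exE, rename_tac c d, rule_tac x = "\<lambda>l. c l + d l" in exI)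
    (simp add: distrib_right sum.distrib)

lemma in_span_scale: "in_span n R m v \<Longrightarrow> in_span n R m (\<lambda>k. s * v k)"
  unfolding in_span_def
  by (elim exE, rename_tac c, rule_tac x = "\<lambda>l. s * c l" in exI)
    (simp add: sum_distrib_left mult.assoc)

lemma in_span_diff:
  fixes R :: "'a::ring_1 mat"
  shows "in_span n R m v \<Longrightarrow> in_span n R m w \<Longrightarrow> in_span n R m (\<lambda>k. v k - w k)"
  using in_span_add[of n R m v "\<lambda>k. - 1 * w k"] in_span_scale[of n R m w "- 1"] by simp

lemma in_span_sum:
  "finite A \<Longrightarrow> (\<And>t. t \<in> A \<Longrightarrow> in_span n R m (f t)) \<Longrightarrow> in_span n R m (\<lambda>k. \<Sum>t\<in>A. f t k)"
  by (induction A rule: finite_induct) (simp_all add: in_span_zero in_span_add)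

lemma in_span_trans:
  assumes "\<forall>l<m'. in_span n R m (S l)" and "in_span n S m' v"
  shows "in_span n R m v"
proof -
  obtain c where c: "\<forall>k<n. v k = (\<Sum>l<m'. c l * S l k)"
    using assms(2) unfolding in_span_def by blast
  have "in_span n R m (\<lambda>k. \<Sum>l\<in>{..<m'}. c l * S l k)"
    by (rule in_span_sum) (simp_all add: assms(1) in_span_scale)
  then show ?thesis by (rule in_span_cong) (simp add: c)
qed

lemma unit_in_span_of_pivot:
  fixes R :: "'a::division_ring mat"
  assumes "finite P" "p \<in> P" "v p \<noteq> 0" and v_supp: "\<forall>k<n. k \<notin> P \<longrightarrow> v k = 0"
    and "in_span n R m v" and units: "\<forall>t\<in>P - {p}. in_span n R m (mat_one t)"
  shows "in_span n R m (mat_one p)"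
proof -
  let ?w = "\<lambda>k. \<Sum>t\<in>P - {p}. v t * mat_one t k"
  have "in_span n R m ?w"
    by (rule in_span_sum) (simp_all add: assms in_span_scale)
  with assms have "in_span n R m (\<lambda>k. inverse (v p) * (v k - ?w k))"
    by (intro in_span_scale in_span_diff)
  moreover have "mat_one p k = inverse (v p) * (v k - ?w k)" if "k < n" for k
  proof -
    have "?w k = (if k \<in> P - {p} then v k else 0)"
      using \<open>finite P\<close> by (simp add: mat_one_def if_distrib cong: if_cong)
    then show ?thesis
      using \<open>v p \<noteq> 0\<close> v_supp that by (auto simp: mat_one_def)
  qed
  ultimately show ?thesis by (simp add: in_span_cong)
qed

lemma in_span_extend:
  fixes S :: "'a::ring mat"
  assumes "in_span n S k (\<lambda>j. w j - c * v j)"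
  shows "in_span n (S(k := v)) (Suc k) w"
proof -
  obtain d where d: "\<forall>j<n. w j - c * v j = (\<Sum>i<k. d i * S i j)"
    using assms unfolding in_span_def by blast
  show ?thesis
    unfolding in_span_def
    by (rule exI[of _ "d(k := c)"]) (simp add: d[rule_format, symmetric])
qed

text \<open>Gaussian elimination on the columns \<open>P\<close> supporting the rows: pivot on a nonzero entry in
  column \<open>p\<close>, clear that column from all rows and recurse on \<open>P - {p}\<close>.\<close>

lemma rows_span_units_or_few_rows:
  fixes R :: "'a::division_ring mat"
  assumes "P \<subseteq> {..<n}" and "\<forall>l<m. \<forall>k<n. k \<notin> P \<longrightarrow> R l k = 0"
  shows "(\<forall>t\<in>P. in_span n R m (mat_one t)) \<or> (\<exists>S. \<forall>l<m. in_span n S (card P - 1) (R l))"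
  using assms
proof (induction "card P" arbitrary: P R rule: less_induct)
  case less
  have "finite P" using less.prems(1) finite_subset by blast
  show ?case
  proof (cases "\<forall>l<m. \<forall>k<n. R l k = 0")
    case True
    then show ?thesis
      by (intro disjI2 exI allI impI) (rule in_span_cong[OF in_span_zero], simp)
  next
    case False
    then obtain l0 p where "l0 < m" "p < n" and pivot: "R l0 p \<noteq> 0" by blast
    with less.prems(2) have "p \<in> P" by blast
    define v where "v = R l0"
    define c where "c l = R l p * inverse (v p)" for l
    define R' where "R' = (\<lambda>l k. R l k - c l * v k)"
    have "v p \<noteq> 0" using pivot by (simp add: v_def)
    have v_span: "in_span n R m v"
      using \<open>l0 < m\<close> by (simp add: v_def in_span_row)
    have R'_span: "\<forall>l<m. in_span n R m (R' l)"
      unfolding R'_def by (simp add: in_span_row in_span_diff in_span_scale v_span)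
    have "\<forall>l<m. \<forall>k<n. k \<notin> P - {p} \<longrightarrow> R' l k = 0"
      using less.prems(2) \<open>l0 < m\<close> \<open>v p \<noteq> 0\<close>
      by (auto simp: R'_def c_def v_def mult.assoc)
    moreover have card_less: "card (P - {p}) < card P"
      using \<open>finite P\<close> \<open>p \<in> P\<close> by (rule card_Diff1_less)
    ultimately have IH: "(\<forall>t\<in>P - {p}. in_span n R' m (mat_one t)) \<or>
        (\<exists>S. \<forall>l<m. in_span n S (card (P - {p}) - 1) (R' l))"
      using less.hyps less.prems(1) by blast
    show ?thesis
    proof (cases "\<forall>t\<in>P - {p}. in_span n R' m (mat_one t)")
      case True
      then have "\<forall>t\<in>P - {p}. in_span n R m (mat_one t)"
        using in_span_trans R'_span by blast
      moreover have "\<forall>k<n. k \<notin> P \<longrightarrow> v k = 0"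
        using less.prems(2) \<open>l0 < m\<close> by (simp add: v_def)
      ultimately have "in_span n R m (mat_one p)"
        using unit_in_span_of_pivot \<open>finite P\<close> \<open>p \<in> P\<close> \<open>v p \<noteq> 0\<close> v_span by blast
      with \<open>\<forall>t\<in>P - {p}. in_span n R m (mat_one t)\<close> show ?thesis by blast
    next
      case False
      then obtain S where S: "\<forall>l<m. in_span n S (card (P - {p}) - 1) (R' l)"
        using IH by blast
      from False have "card (P - {p}) > 0"
        using \<open>finite P\<close> by (auto simp: card_gt_0_iff)
      then have "card P - 1 = Suc (card (P - {p}) - 1)"
        using \<open>finite P\<close> \<open>p \<in> P\<close> by (simp add: card_Diff_singleton)
      moreover have "\<forall>l<m. in_span n (S(card (P - {p}) - 1 := v)) (Suc (card (P - {p}) - 1)) (R l)"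
        using S in_span_extend unfolding R'_def by blast
      ultimately show ?thesis by metis
    qed
  qed
qed

lemma left_invertible_or_factors:
  fixes A :: "'a::division_ring mat"
  shows "(\<exists>B. mat_eq n (mat_mult n B A) mat_one) \<or> (\<exists>L R. mat_eq n A (mat_mult (n - 1) L R))"
proof -
  have "(\<forall>t\<in>{..<n}. in_span n A n (mat_one t)) \<or> (\<exists>S. \<forall>l<n. in_span n S (n - 1) (A l))"
    using rows_span_units_or_few_rows[of "{..<n}" n n A] by simp
  then show ?thesis
  proof
    assume "\<forall>t\<in>{..<n}. in_span n A n (mat_one t)"
    then have "\<forall>t. \<exists>b. t < n \<longrightarrow> (\<forall>k<n. mat_one t k = (\<Sum>l<n. b l * A l k))"
      by (simp add: in_span_def)
    then obtain B where "\<forall>t<n. \<forall>k<n. mat_one t k = (\<Sum>l<n. B t l * A l k)"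
      by metis
    then show ?thesis by (auto simp: mat_eq_def mat_mult_def)
  next
    assume "\<exists>S. \<forall>l<n. in_span n S (n - 1) (A l)"
    then obtain R where "\<forall>l. \<exists>c. l < n \<longrightarrow> (\<forall>k<n. A l k = (\<Sum>i<n - 1. c i * R i k))"
      by (auto simp: in_span_def)
    then obtain L where "\<forall>l<n. \<forall>k<n. A l k = (\<Sum>i<n - 1. L l i * R i k)"
      by metis
    then show ?thesis by (auto simp: mat_eq_def mat_mult_def)
  qed
qed

section \<open>Normal forms of \<open>3 \<times> 3\<close> matrices\<close>

text \<open>Rows 1 and 2 of \<open>N - diag G\<close> are the rows of \<open>R\<close>, whose columns 1 and 2 form the invertible
  block \<open>(1 0; N\<^sub>2\<^sub>1 1) (1 N\<^sub>1\<^sub>2; 0 1)\<close>. Hence row 0 of \<open>N\<close> off the diagonal is a left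
  combination \<open>\<alpha> R\<^sub>0 + \<beta> R\<^sub>1\<close>, and \<open>G 0\<close> absorbs the remaining entry.\<close>

lemma diagonal_plus_rank_two:
  fixes N :: "'a::ring_1 mat"
  shows "\<exists>G L R. mat_eq 3 N (mat_diag G + mat_mult 2 L R)"
proof -
  define \<beta> where "\<beta> = N 0 2 - N 0 1 * N 1 2"
  define \<alpha> where "\<alpha> = N 0 1 - \<beta> * N 2 1"
  define G where "G i = [N 0 0 - \<alpha> * N 1 0 - \<beta> * N 2 0, N 1 1 - 1, N 2 2 - 1 - N 2 1 * N 1 2] ! i" for i
  define L where "L i m = [[\<alpha>, \<beta>], [1, 0], [0, 1]] ! i ! m" for i m
  define R where "R m k = [[N 1 0, 1, N 1 2], [N 2 0, N 2 1, 1 + N 2 1 * N 1 2]] ! m ! k" for m k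
  have "mat_eq 3 N (mat_diag G + mat_mult 2 L R)"
    by (simp add: mat_eq_def all_less_3 mat_diag_def mat_mult_def sum_lessThan_2 G_def L_def R_def
        \<alpha>_def \<beta>_def algebra_simps)
  then show ?thesis by blast
qed

lemma of_nat_quat: "(of_nat n :: quat) = Quat (real n) 0 0 0"
  by (induction n) (simp_all add: quat_eq_iff)

lemma central_pair_avoiding:
  "\<exists>d0 d2 :: quat. d0 \<noteq> d1 \<and> d2 \<noteq> d1 \<and> d0 \<noteq> d2 \<and> (\<forall>q. d0 * q = q * d0) \<and> (\<forall>q. d2 * q = q * d2)"
proof -
  have central: "\<forall>q. of_nat n * q = q * (of_nat n :: quat)" for n
    by (simp add: mult_of_nat_commute)
  have distinct: "(of_nat m :: quat) \<noteq> of_nat n" if "m \<noteq> n" for m n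
    using that by (simp add: of_nat_quat)
  obtain m n :: nat where "m \<noteq> n" "of_nat m \<noteq> d1" "of_nat n \<noteq> d1"
  proof (cases "d1 = of_nat 0")
    case True
    then show ?thesis using distinct[of 1 0] distinct[of 2 0] by (intro that[of 1 2]) auto
  next
    case d1_ne_0: False
    show ?thesis
    proof (cases "d1 = of_nat 1")
      case True
      then show ?thesis using d1_ne_0 distinct[of 2 1] by (intro that[of 0 2]) auto
    next
      case False
      then show ?thesis using d1_ne_0 by (intro that[of 0 1]) auto
    qed
  qed
  then show ?thesis using central distinct by blast
qed

text \<open>The eigenvector entries solve Sylvester equations \<open>d\<^sub>a u - u d\<^sub>b = c\<close>; these are solved by a
  single division because one of \<open>d\<^sub>a, d\<^sub>b\<close> is central.\<close>

lemma upper_triangular_diagonalizable: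
  fixes Z :: "'a::division_ring mat"
  assumes upper: "Z 1 0 = 0" "Z 2 0 = 0" "Z 2 1 = 0"
    and diag: "Z 0 0 = d 0" "Z 1 1 = d 1" "Z 2 2 = d 2"
    and distinct: "d 0 \<noteq> d 1" "d 1 \<noteq> d 2" "d 0 \<noteq> d 2"
    and central: "\<And>q. d 0 * q = q * d 0" "\<And>q. d 2 * q = q * d 2"
  shows "\<exists>U V. mat_eq 3 (mat_mult 3 U V) mat_one \<and>
    mat_eq 3 Z (mat_mult 3 (mat_mult 3 U (mat_diag d)) V)"
proof -
  define p where "p = - Z 0 1 * inverse (d 0 - d 1)"
  define q where "q = - inverse (d 1 - d 2) * Z 1 2"
  define p' where "p' = - (Z 0 1 * q + Z 0 2) * inverse (d 0 - d 2)"
  have "p * (d 0 - d 1) = - Z 0 1"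
    using distinct by (simp add: p_def mult.assoc)
  then have u1_row0: "d 0 * p + Z 0 1 = p * d 1"
    by (simp add: central algebra_simps)
  have "(d 1 - d 2) * q = - Z 1 2"
    using distinct by (simp add: q_def mult.assoc[symmetric])
  then have u2_row1: "d 1 * q + Z 1 2 = q * d 2"
    by (simp add: central[symmetric] algebra_simps)
  have "p' * (d 0 - d 2) = - (Z 0 1 * q + Z 0 2)"
    using distinct by (simp add: p'_def mult.assoc)
  then have u2_row0: "d 0 * p' + Z 0 1 * q + Z 0 2 = p' * d 2"
    by (simp add: central algebra_simps)
  define U where "U i k = [[1, p, p'], [0, 1, q], [0, 0, 1]] ! i ! k" for i k
  define V where "V i k = [[1, - p, p * q - p'], [0, 1, - q], [0, 0, 1]] ! i ! k" for i k
  have UV: "mat_eq 3 (mat_mult 3 U V) mat_one"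
    by (simp add: mat_eq_def mat_mult_def mat_one_def all_less_3 sum_lessThan_3 U_def V_def)
  have "mat_eq 3 Z (mat_mult 3 (mat_mult 3 Z U) V)"
    using mat_mult_cancel_right[OF UV] by (rule mat_eq_sym)
  also have "mat_eq 3 \<dots> (mat_mult 3 (mat_mult 3 U (mat_diag d)) V)"
    by (rule mat_mult_cong[OF order_refl _ mat_eq_refl])
      (use upper diag u1_row0 u2_row1 u2_row0 in
        \<open>simp add: mat_eq_def mat_mult_def mat_diag_def all_less_3 sum_lessThan_3 U_def\<close>)
  finally show ?thesis using UV by blast
qed

definition diagonalizable_mod_rank_one :: "'a::semiring_1 mat \<Rightarrow> bool" where
  "diagonalizable_mod_rank_one M \<longleftrightarrow> (\<exists>U V d X Y. mat_eq 3 (mat_mult 3 U V) mat_one \<and>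
     mat_eq 3 M (mat_mult 3 (mat_mult 3 U (mat_diag d)) V + mat_mult 1 X Y))"

text \<open>\<open>X Y\<close> agrees with \<open>M\<close> in column 0 below \<open>d0\<close> and in row 2 left of \<open>d2\<close>, so \<open>M - X Y\<close> is
  upper triangular.\<close>

lemma diagonalizable_mod_rank_one_of_corner:
  fixes M :: "quat mat"
  assumes "M 2 0 \<noteq> 0"
  shows "diagonalizable_mod_rank_one M"
proof -
  define d1 where "d1 = M 1 1 - M 1 0 * inverse (M 2 0) * M 2 1"
  obtain d0 d2 where "d0 \<noteq> d1" "d2 \<noteq> d1" "d0 \<noteq> d2"
    and central: "\<forall>q. d0 * q = q * d0" "\<forall>q. d2 * q = q * d2"
    using central_pair_avoiding by blast
  define d where "d i = [d0, d1, d2] ! i" for i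
  define X where "X i m = [M 0 0 - d0, M 1 0, M 2 0] ! i" for i m :: nat
  define Y where "Y m k = [1, inverse (M 2 0) * M 2 1, inverse (M 2 0) * (M 2 2 - d2)] ! k"
    for m k :: nat
  define Z where "Z = (\<lambda>i k. M i k - mat_mult 1 X Y i k)"
  have "Z 1 0 = 0" "Z 2 0 = 0" "Z 2 1 = 0" "Z 0 0 = d 0" "Z 1 1 = d 1" "Z 2 2 = d 2"
    using assms by (simp_all add: Z_def X_def Y_def d_def d1_def mat_mult_def mult.assoc[symmetric])
  moreover have "d 0 \<noteq> d 1" "d 1 \<noteq> d 2" "d 0 \<noteq> d 2" "\<And>q. d 0 * q = q * d 0" "\<And>q. d 2 * q = q * d 2"
    using \<open>d0 \<noteq> d1\<close> \<open>d2 \<noteq> d1\<close> \<open>d0 \<noteq> d2\<close> central by (simp_all add: d_def)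
  ultimately obtain U V where "mat_eq 3 (mat_mult 3 U V) mat_one"
    and "mat_eq 3 Z (mat_mult 3 (mat_mult 3 U (mat_diag d)) V)"
    using upper_triangular_diagonalizable[of Z d] by blast
  moreover have "M = Z + mat_mult 1 X Y"
    by (simp add: Z_def plus_fun_def)
  ultimately show ?thesis
    unfolding diagonalizable_mod_rank_one_def by (metis mat_add_cong mat_eq_refl)
qed

lemma diagonalizable_mod_rank_one_reindex:
  assumes "diagonalizable_mod_rank_one (\<lambda>i k. M (\<sigma> i) (\<sigma> k))"
    and \<tau>: "\<And>i. i < 3 \<Longrightarrow> \<tau> i < 3 \<and> \<sigma> (\<tau> i) = i"
  shows "diagonalizable_mod_rank_one M"
proof -
  obtain U V d X Y where UV: "mat_eq 3 (mat_mult 3 U V) mat_one"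
    and M: "mat_eq 3 (\<lambda>i k. M (\<sigma> i) (\<sigma> k)) (mat_mult 3 (mat_mult 3 U (mat_diag d)) V + mat_mult 1 X Y)"
    using assms(1) unfolding diagonalizable_mod_rank_one_def by blast
  let ?U = "\<lambda>i. U (\<tau> i)" and ?V = "\<lambda>l k. V l (\<tau> k)"
  let ?X = "\<lambda>i. X (\<tau> i)" and ?Y = "\<lambda>m k. Y m (\<tau> k)"
  have "mat_eq 3 (mat_mult 3 ?U ?V) mat_one"
    unfolding mat_eq_def
  proof (intro allI impI)
    fix i k :: nat assume "i < 3" "k < 3"
    have "mat_mult 3 ?U ?V i k = mat_one (\<tau> i) (\<tau> k)"
      using UV \<tau>[OF \<open>i < 3\<close>] \<tau>[OF \<open>k < 3\<close>] by (simp add: mat_eq_def mat_mult_def)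
    also have "\<dots> = mat_one i k"
      using \<tau>[OF \<open>i < 3\<close>] \<tau>[OF \<open>k < 3\<close>] unfolding mat_one_def by metis
    finally show "mat_mult 3 ?U ?V i k = mat_one i k" .
  qed
  moreover have "mat_eq 3 M (mat_mult 3 (mat_mult 3 ?U (mat_diag d)) ?V + mat_mult 1 ?X ?Y)"
    unfolding mat_eq_def
  proof (intro allI impI)
    fix i k :: nat assume "i < 3" "k < 3"
    have "M i k = M (\<sigma> (\<tau> i)) (\<sigma> (\<tau> k))"
      using \<tau>[OF \<open>i < 3\<close>] \<tau>[OF \<open>k < 3\<close>] by simp
    also have "\<dots> = (mat_mult 3 (mat_mult 3 U (mat_diag d)) V + mat_mult 1 X Y) (\<tau> i) (\<tau> k)"
      using M \<tau>[OF \<open>i < 3\<close>] \<tau>[OF \<open>k < 3\<close>] unfolding mat_eq_def by blast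
    finally show "M i k = (mat_mult 3 (mat_mult 3 ?U (mat_diag d)) ?V + mat_mult 1 ?X ?Y) i k"
      by (simp add: mat_mult_def plus_fun_def)
  qed
  ultimately show ?thesis
    unfolding diagonalizable_mod_rank_one_def by blast
qed

lemma diagonalizable_mod_rank_one: "diagonalizable_mod_rank_one (M :: quat mat)"
proof (cases "\<forall>i<3. \<forall>k<3. i \<noteq> k \<longrightarrow> M i k = 0")
  case True
  then have "mat_eq 3 M (mat_mult 3 (mat_mult 3 mat_one (mat_diag (\<lambda>i. M i i))) mat_one + mat_mult 1 0 0)"
    by (auto simp: mat_eq_def mat_mult_diag mat_one_def all_less_3 sum_lessThan_3 mat_mult_def mat_diag_def)
  moreover have "mat_eq 3 (mat_mult 3 mat_one mat_one) (mat_one :: quat mat)"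
    by (rule mat_mult_one_left)
  ultimately show ?thesis
    unfolding diagonalizable_mod_rank_one_def by blast
next
  case False
  then obtain p q where "p < 3" "q < 3" "p \<noteq> q" "M p q \<noteq> 0" by blast
  define \<sigma> where "\<sigma> t = [q, 3 - p - q, p] ! t" for t
  define \<tau> :: "nat \<Rightarrow> nat" where "\<tau> i = (if i = p then 2 else if i = q then 0 else 1)" for i
  have "\<tau> i < 3 \<and> \<sigma> (\<tau> i) = i" if "i < 3" for i
    using \<open>p < 3\<close> \<open>q < 3\<close> \<open>p \<noteq> q\<close> that by (auto simp: \<sigma>_def \<tau>_def)
  moreover have "diagonalizable_mod_rank_one (\<lambda>i k. M (\<sigma> i) (\<sigma> k))"
    by (rule diagonalizable_mod_rank_one_of_corner) (simp add: \<sigma>_def \<open>M p q \<noteq> 0\<close>)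
  ultimately show ?thesis
    by (rule diagonalizable_mod_rank_one_reindex[rotated])
qed

section \<open>Three slices, one of them invertible\<close>

lemma common_diagonal_form:
  fixes A :: "quat mat"
  assumes BA: "mat_eq 3 (mat_mult 3 B A) mat_one"
  shows "\<exists>U W d G X Y P Q.
     mat_eq 3 A (mat_mult 3 U W) \<and>
     mat_eq 3 A' (mat_mult 3 (mat_mult 3 U (mat_diag d)) W + mat_mult 1 X Y) \<and>
     mat_eq 3 A'' (mat_mult 3 (mat_mult 3 U (mat_diag G)) W + mat_mult 2 P Q)"
proof -
  obtain U V d X Y where UV: "mat_eq 3 (mat_mult 3 U V) mat_one"
    and A'B: "mat_eq 3 (mat_mult 3 A' B) (mat_mult 3 (mat_mult 3 U (mat_diag d)) V + mat_mult 1 X Y)"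
    using diagonalizable_mod_rank_one[of "mat_mult 3 A' B"]
    unfolding diagonalizable_mod_rank_one_def by blast
  define N where "N = mat_mult 3 (mat_mult 3 V (mat_mult 3 A'' B)) U"
  obtain G L R where N: "mat_eq 3 N (mat_diag G + mat_mult 2 L R)"
    using diagonal_plus_rank_two by blast
  define W where "W = mat_mult 3 V A"
  have "mat_eq 3 A (mat_mult 3 U W)"
    unfolding W_def using mat_mult_cancel_left[OF UV] by (rule mat_eq_sym)
  moreover have "mat_eq 3 A' (mat_mult 3 (mat_mult 3 U (mat_diag d)) W + mat_mult 1 X (mat_mult 3 Y A))"
  proof -
    have "mat_eq 3 A' (mat_mult 3 (mat_mult 3 A' B) A)"
      using mat_mult_cancel_right[OF BA] by (rule mat_eq_sym)
    also have "mat_eq 3 \<dots> (mat_mult 3 (mat_mult 3 (mat_mult 3 U (mat_diag d)) V + mat_mult 1 X Y) A)"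
      using A'B by (simp add: mat_mult_cong mat_eq_refl)
    also have "\<dots> = mat_mult 3 (mat_mult 3 U (mat_diag d)) W + mat_mult 1 X (mat_mult 3 Y A)"
      by (simp add: W_def mat_mult_add_left mat_mult_assoc)
    finally show ?thesis .
  qed
  moreover have "mat_eq 3 A'' (mat_mult 3 (mat_mult 3 U (mat_diag G)) W +
      mat_mult 2 (mat_mult 3 U L) (mat_mult 3 R W))"
  proof -
    have "mat_eq 3 (mat_mult 3 A'' B) (mat_mult 3 U (mat_mult 3 V (mat_mult 3 A'' B)))"
      using mat_mult_cancel_left[OF UV] by (rule mat_eq_sym)
    also have "mat_eq 3 \<dots> (mat_mult 3 U (mat_mult 3 N V))"
      unfolding N_def using mat_mult_cancel_right[OF UV]
      by (simp add: mat_mult_cong mat_eq_sym mat_eq_refl)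
    also have "mat_eq 3 \<dots> (mat_mult 3 U (mat_mult 3 (mat_diag G + mat_mult 2 L R) V))"
      using N by (simp add: mat_mult_cong mat_eq_refl)
    finally have A''B: "mat_eq 3 (mat_mult 3 A'' B) (mat_mult 3 U (mat_mult 3 (mat_diag G + mat_mult 2 L R) V))" .
    have "mat_eq 3 A'' (mat_mult 3 (mat_mult 3 A'' B) A)"
      using mat_mult_cancel_right[OF BA] by (rule mat_eq_sym)
    also have "mat_eq 3 \<dots> (mat_mult 3 (mat_mult 3 U (mat_mult 3 (mat_diag G + mat_mult 2 L R) V)) A)"
      using A''B by (simp add: mat_mult_cong mat_eq_refl)
    also have "\<dots> = mat_mult 3 (mat_mult 3 U (mat_diag G)) W + mat_mult 2 (mat_mult 3 U L) (mat_mult 3 R W)"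
      by (simp add: W_def mat_mult_add_left mat_mult_add_right mat_mult_assoc)
    finally show ?thesis .
  qed
  ultimately show ?thesis by blast
qed

lemma rank1_sum_of_common_diagonal_form:
  assumes "mat_eq 3 (S 0) (mat_mult 3 U W)"
    and "mat_eq 3 (S 1) (mat_mult 3 (mat_mult 3 U (mat_diag d)) W + mat_mult 1 X Y)"
    and "mat_eq 3 (S 2) (mat_mult 3 (mat_mult 3 U (mat_diag G)) W + mat_mult 2 P Q)"
  shows "rank1_sum 3 3 3 6 (\<lambda>i j k. S j i k)"
proof -
  have "rank1_sum 3 3 3 (3 + 1 + 2) (\<lambda>i j k.
      (\<Sum>l<3. U i l * [1, d l, G l] ! j * W l k) +
      (\<Sum>l<1. X i l * [0, 1, 0] ! j * Y l k) +
      (\<Sum>l<2. P i l * [0, 0, 1] ! j * Q l k))"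
    by (intro rank1_sum_add rank1_sumI)
  then have "rank1_sum 3 3 3 (3 + 1 + 2) (\<lambda>i j k. S j i k)"
  proof (rule rank1_sum_cong)
    fix i j k :: nat
    assume "i < 3" "j < 3" "k < 3"
    then consider "j = 0" | "j = 1" | "j = 2" by linarith
    then show "S j i k = (\<Sum>l<3. U i l * [1, d l, G l] ! j * W l k) +
        (\<Sum>l<1. X i l * [0, 1, 0] ! j * Y l k) + (\<Sum>l<2. P i l * [0, 0, 1] ! j * Q l k)"
      using assms[unfolded mat_eq_def mat_mult_diag] \<open>i < 3\<close> \<open>k < 3\<close>
      by cases (simp_all add: mat_mult_def)
  qed
  then show ?thesis by simp
qed

lemma rank1_sum_of_left_invertible_slice:
  assumes "mat_eq 3 (mat_mult 3 B (S 0)) mat_one"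
  shows "rank1_sum 3 3 3 6 (\<lambda>i j k. S j i k)"
  using common_diagonal_form[OF assms, of "S 1" "S 2"] rank1_sum_of_common_diagonal_form by blast

theorem mainTheorem16:
  fixes T :: qtensor
  shows "qtensor_rank 3 3 3 T \<le> 6"
proof (rule qtensor_rank_le_of_rank1_sum)
  define S where "S j i k = T i j k" for j i k
  show "rank1_sum 3 3 3 6 T"
  proof (cases "\<exists>j0<3. \<exists>B. mat_eq 3 (mat_mult 3 B (S j0)) mat_one")
    case True
    then obtain j0 B where "j0 < 3" and "mat_eq 3 (mat_mult 3 B (S j0)) mat_one"
      by blast
    then have "rank1_sum 3 3 3 6 (\<lambda>i t k. T i ((j0 + t) mod 3) k)"
      using rank1_sum_of_left_invertible_slice[of B "\<lambda>t. S ((j0 + t) mod 3)"] by (simp add: S_def)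
    then show ?thesis
      by (rule rank1_sum_reindex_slices[where \<sigma> = "\<lambda>j. (j + 3 - j0) mod 3"])
        (use \<open>j0 < 3\<close> in \<open>auto simp: mod_add_right_eq\<close>)
  next
    case False
    have "\<forall>j<3. \<exists>L R. mat_eq 3 (S j) (mat_mult 2 L R)"
    proof (intro allI impI)
      fix j :: nat assume "j < 3"
      then show "\<exists>L R. mat_eq 3 (S j) (mat_mult 2 L R)"
        using left_invertible_or_factors[of 3 "S j"] False by auto
    qed
    then have "rank1_sum 3 3 3 (3 * 2) T"
      by (intro rank1_sum_of_slice_factorizations) (simp add: mat_eq_def S_def)
    then show ?thesis by simp
  qed
qed

end
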